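(* Fix the minority ratio $r$ of the Biased Preferential Attachment Model (BPAM) described in the context. For $x\in(0,1]$ define $$F^{(t)}(x)=\frac{MF^{(t)}(R,x,r)}{MF^{(t)}(B,x,r)}=\frac{q_{RB}(x)}{q_{BB}(x)},$$ where $x$ is the homophily parameter, and $q_{RB}(x), q_{BB}(x)$ are as defined in the context with $\rho=x$ and with $\alpha=\alpha(x)$ the asymptotic red edge fraction for that homophily parameter. Then for every integer $t\geq 1$, $F^{(t)}$ is an increasing function on $(0,1]$ and $F^{(t)}(1)=1$.
   Context: The BPAM with two communities (red $R$, blue $B$) grows a directed network one node at a time. A new node is labeled $R$ with probability $r$ and $B$ with probability $1-r$, where $0< r\le 1/2$. The new node picks a target with probability proportional to current degree. If the two labels differ, the edge is accepted with probability $\rho\in[0,1]$ (the homophily parameter); otherwise the choice is repeated until an edge forms. This is repeated $d$ times, so every node has outdegree $d$. Let $\alpha=\alpha(\rho)$ be the limit as $N\to\infty$ of the expected fraction of total degree belonging to red nodes. It is characterized as the equilibrium (fixed point) satisfying $$\alpha=\tfrac12\Big(r+\tfrac{r\alpha}{\alpha+\rho-\alpha\rho}+\tfrac{\alpha\rho(1-r)}{\alpha\rho+1-\alpha}\Big),$$ and it satisfies $\alpha<r$. Define $$p^{out}_{RB}=\frac{\rho(1-\alpha)}{\alpha+\rho(1-\alpha)},\qquad p^{out}_{BB}=\frac{1-\alpha}{\rho\alpha+1-\alpha}.$$ Let $D_B=\frac{r\rho}{\alpha+\rho(1-\alpha)}+\frac{1-r}{\alpha\rho+1-\alpha}$ and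 $D_R=\frac{r}{\alpha+\rho(1-\alpha)}+\frac{\rho(1-r)}{\alpha\rho+1-\alpha}$. Define $$p^{in}_{BB}=\frac{(1-r)/(\alpha\rho+1-\alpha)}{D_B},\qquad p^{in}_{BR}=\frac{\rho r/(\alpha+\rho(1-\alpha))}{D_B},$$ $$p^{in}_{RR}=\frac{r/(\alpha+\rho(1-\alpha))}{D_R},\qquad p^{in}_{RB}=\frac{\rho(1-r)/(\alpha\rho+1-\alpha)}{D_R}.$$ Set $$q_{BB}=p^{in}_{BB}p^{out}_{BB}+p^{in}_{BR}p^{out}_{RB},\qquad q_{RB}=p^{in}_{RB}p^{out}_{BB}+p^{in}_{RR}p^{out}_{RB}.$$ In the paper's mean-field analysis of HITS, the multiplicative factors are $MF^{(t)}(R)=q_{RB}\tilde d^{in}_t(B)$ and $MF^{(t)}(B)=q_{BB}\tilde d^{in}_t(B)$. Here $\tilde d^{in}_t(B)=\sum_{u\in B}(d^{in}(u))^t/\sum_{u\in B}d^{in}(u)$ is the size-biased $t$-th indegree moment of the blue nodes, so their ratio is $q_{RB}/q_{BB}$. *)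

theory Defs
  imports "HOL-Analysis.Analysis"
begin

text \<open>BPAM equilibrium equation for the red degree fraction a, with minority
ratio r and homophily parameter \<rho>.\<close>
definition bpam_eq :: "real \<Rightarrow> real \<Rightarrow> real \<Rightarrow> bool" where
  "bpam_eq r \<rho> a \<longleftrightarrow>
     a = (1/2) * (r + r * a / (a + \<rho> - a * \<rho>) + a * \<rho> * (1 - r) / (a * \<rho> + 1 - a))"

definition bpam_alpha :: "real \<Rightarrow> real \<Rightarrow> real" where
  "bpam_alpha r \<rho> = (THE a. 0 < a \<and> a < 1 \<and> bpam_eq r \<rho> a)"

definition p_out_RB :: "real \<Rightarrow> real \<Rightarrow> real" where
  "p_out_RB \<rho> a = \<rho> * (1 - a) / (a + \<rho> * (1 - a))"
definition p_out_BB :: "real \<Rightarrow> real \<Rightarrow> real" where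
  "p_out_BB \<rho> a = (1 - a) / (\<rho> * a + 1 - a)"

definition D_B :: "real \<Rightarrow> real \<Rightarrow> real \<Rightarrow> real" where
  "D_B r \<rho> a = r * \<rho> / (a + \<rho> * (1 - a)) + (1 - r) / (a * \<rho> + 1 - a)"
definition D_R :: "real \<Rightarrow> real \<Rightarrow> real \<Rightarrow> real" where
  "D_R r \<rho> a = r / (a + \<rho> * (1 - a)) + \<rho> * (1 - r) / (a * \<rho> + 1 - a)"

definition p_in_BB :: "real \<Rightarrow> real \<Rightarrow> real \<Rightarrow> real" where
  "p_in_BB r \<rho> a = ((1 - r) / (a * \<rho> + 1 - a)) / D_B r \<rho> a"
definition p_in_BR :: "real \<Rightarrow> real \<Rightarrow> real \<Rightarrow> real" where
  "p_in_BR r \<rho> a = (\<rho> * r / (a + \<rho> * (1 - a))) / D_B r \<rho> a"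
definition p_in_RR :: "real \<Rightarrow> real \<Rightarrow> real \<Rightarrow> real" where
  "p_in_RR r \<rho> a = (r / (a + \<rho> * (1 - a))) / D_R r \<rho> a"
definition p_in_RB :: "real \<Rightarrow> real \<Rightarrow> real \<Rightarrow> real" where
  "p_in_RB r \<rho> a = (\<rho> * (1 - r) / (a * \<rho> + 1 - a)) / D_R r \<rho> a"

definition q_BB :: "real \<Rightarrow> real \<Rightarrow> real" where
  "q_BB r x = (let a = bpam_alpha r x in
     p_in_BB r x a * p_out_BB x a + p_in_BR r x a * p_out_RB x a)"
definition q_RB :: "real \<Rightarrow> real \<Rightarrow> real" where
  "q_RB r x = (let a = bpam_alpha r x in
     p_in_RB r x a * p_out_BB x a + p_in_RR r x a * p_out_RB x a)"

text \<open>Ratio of the HITS multiplicative factors MF^(t)(R)/MF^(t)(B); the common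
factor (size-biased t-th indegree moment of blue nodes) cancels.\<close>
definition F_ratio :: "nat \<Rightarrow> real \<Rightarrow> real \<Rightarrow> real" where
  "F_ratio t r x = q_RB r x / q_BB r x"

end

(*
  Write z for the ratio of the acceptance probabilities a + \<rho>(1 - a) and a\<rho> + 1 - a of
  a red and of a blue newcomer's attachment attempt, and s = r/(1 - r) for the minority
  odds.  In the coordinates (\<rho>, z) the equilibrium equation becomes the explicit relation
  s = S(\<rho>, z) (equilibrium_odds), and the ratio of multiplicative factors becomes an
  explicit rational function H(\<rho>, s, z) (hits_ratio).  S is strictly increasing in z and
  along every ray z = w\<rho>, w > 1.  H is decreasing in z as long as s \<ge> z - \<rho>, which
  S(\<rho>, z) \<ge> z - \<rho> guarantees below the equilibrium curve, and nondecreasing along rays.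
  For x < y on the equilibrium curve of a fixed s, the ray through (y, z(y)) passes below
  (x, z(x)), so descending from (x, z(x)) to the ray and then following the ray to
  (y, z(y)) shows F(x) < F(y).  At \<rho> = 1 every acceptance ratio equals 1 and F = 1.
*)
theory Submission
  imports Defs
begin

lemma frac_less_frac_by_cross:
  fixes a b c d :: "'a::linordered_field"
  assumes "0 < b" "0 < d" "a * d < c * b"
  shows "a / b < c / d"
  using assms by (simp add: divide_simps)

lemma frac_le_frac_by_cross:
  fixes a b c d :: "'a::linordered_field"
  assumes "0 < b" "0 < d" "a * d \<le> c * b"
  shows "a / b \<le> c / d"
  using assms by (simp add: divide_simps)

section \<open>The equilibrium odds\<close>

text \<open>The equilibrium equation solved for the minority odds r/(1 - r) as a function of the
  acceptance ratio z (see \<open>bpam_eq_iff_equilibrium_odds\<close>); all three factors are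
  increasing in z.\<close>

definition equilibrium_odds :: "real \<Rightarrow> real \<Rightarrow> real" where
  "equilibrium_odds \<rho> z = (z - \<rho>) / ((2 + \<rho>) * z - \<rho>) * z * ((2 + \<rho> - \<rho> * z) / (1 - \<rho> * z))"

lemma equilibrium_odds_denominator_pos:
  fixes \<rho> z :: real
  assumes "0 < \<rho>" "\<rho> \<le> z"
  shows "0 < (2 + \<rho>) * z - \<rho>"
proof -
  have "(2 + \<rho>) * z - \<rho> = (2 + \<rho>) * (z - \<rho>) + \<rho> * (1 + \<rho>)"
    by algebra
  moreover have "0 \<le> (2 + \<rho>) * (z - \<rho>)" "0 < \<rho> * (1 + \<rho>)"
    using assms by simp_all
  ultimately show ?thesis
    by linarith
qed

lemma equilibrium_odds_strict_mono:
  assumes "0 < \<rho>" "\<rho> \<le> z\<^sub>1" "z\<^sub>1 < z\<^sub>2" "\<rho> * z\<^sub>2 < 1"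
  shows "equilibrium_odds \<rho> z\<^sub>1 < equilibrium_odds \<rho> z\<^sub>2"
proof -
  define f where "f z = (z - \<rho>) / ((2 + \<rho>) * z - \<rho>)" for z
  define g where "g z = (2 + \<rho> - \<rho> * z) / (1 - \<rho> * z)" for z
  have pz1: "\<rho> * z\<^sub>1 < 1"
    using assms mult_strict_left_mono[of z\<^sub>1 z\<^sub>2 \<rho>] by linarith
  have den1: "0 < (2 + \<rho>) * z\<^sub>1 - \<rho>"
    using assms(1,2) by (rule equilibrium_odds_denominator_pos)
  have den2: "0 < (2 + \<rho>) * z\<^sub>2 - \<rho>"
    using assms(1) by (rule equilibrium_odds_denominator_pos) (use assms in linarith)
  have g1: "0 < g z\<^sub>1"
    unfolding g_def using pz1 assms by (intro divide_pos_pos) linarith+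
  have f_mono: "f z\<^sub>1 \<le> f z\<^sub>2"
  proof -
    have "(z\<^sub>2 - \<rho>) * ((2 + \<rho>) * z\<^sub>1 - \<rho>) - (z\<^sub>1 - \<rho>) * ((2 + \<rho>) * z\<^sub>2 - \<rho>)
        = \<rho> * (1 + \<rho>) * (z\<^sub>2 - z\<^sub>1)"
      by algebra
    moreover have "0 \<le> \<rho> * (1 + \<rho>) * (z\<^sub>2 - z\<^sub>1)"
      using assms by simp
    ultimately have "(z\<^sub>1 - \<rho>) * ((2 + \<rho>) * z\<^sub>2 - \<rho>) \<le> (z\<^sub>2 - \<rho>) * ((2 + \<rho>) * z\<^sub>1 - \<rho>)"
      by linarith
    with den1 den2 show ?thesis
      unfolding f_def by (rule frac_le_frac_by_cross)
  qed
  have g_mono: "z\<^sub>1 * g z\<^sub>1 < z\<^sub>2 * g z\<^sub>2"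
  proof -
    have "(2 + \<rho> - \<rho> * z\<^sub>2) * (1 - \<rho> * z\<^sub>1) - (2 + \<rho> - \<rho> * z\<^sub>1) * (1 - \<rho> * z\<^sub>2)
        = \<rho> * (1 + \<rho>) * (z\<^sub>2 - z\<^sub>1)"
      by algebra
    moreover have "0 < \<rho> * (1 + \<rho>) * (z\<^sub>2 - z\<^sub>1)"
      using assms by simp
    ultimately have "(2 + \<rho> - \<rho> * z\<^sub>1) * (1 - \<rho> * z\<^sub>2) < (2 + \<rho> - \<rho> * z\<^sub>2) * (1 - \<rho> * z\<^sub>1)"
      by linarith
    then have "g z\<^sub>1 < g z\<^sub>2"
      unfolding g_def using assms pz1 by (intro frac_less_frac_by_cross) auto
    then show ?thesis
      using assms g1 by (intro mult_strict_mono) auto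
  qed
  have "0 \<le> z\<^sub>1 * g z\<^sub>1"
    using g1 assms by simp
  with f_mono have "f z\<^sub>1 * (z\<^sub>1 * g z\<^sub>1) \<le> f z\<^sub>2 * (z\<^sub>1 * g z\<^sub>1)"
    by (rule mult_right_mono)
  also have "\<dots> < f z\<^sub>2 * (z\<^sub>2 * g z\<^sub>2)"
    using g_mono by (rule mult_strict_left_mono) (use den2 assms in \<open>simp add: f_def\<close>)
  finally show ?thesis
    unfolding equilibrium_odds_def f_def g_def by (simp add: mult.assoc)
qed

lemma equilibrium_odds_ray_strict_mono:
  assumes "1 < w" "0 < \<rho>\<^sub>1" "\<rho>\<^sub>1 < \<rho>\<^sub>2" "w * \<rho>\<^sub>2\<^sup>2 < 1"
  shows "equilibrium_odds \<rho>\<^sub>1 (w * \<rho>\<^sub>1) < equilibrium_odds \<rho>\<^sub>2 (w * \<rho>\<^sub>2)"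
proof -
  define f where "f \<rho> = \<rho> / ((2 + \<rho>) * w - 1)" for \<rho>
  define g where "g \<rho> = (2 + \<rho> - w * \<rho>\<^sup>2) / (1 - w * \<rho>\<^sup>2)" for \<rho>
  have ray: "equilibrium_odds \<rho> (w * \<rho>) = w * (w - 1) * (f \<rho> * g \<rho>)" if "0 < \<rho>" for \<rho>
  proof -
    have eqs: "w * \<rho> - \<rho> = \<rho> * (w - 1)" "(2 + \<rho>) * (w * \<rho>) - \<rho> = \<rho> * ((2 + \<rho>) * w - 1)"
      "\<rho> * (w * \<rho>) = w * \<rho>\<^sup>2"
      by (simp_all add: algebra_simps power2_eq_square)
    have "equilibrium_odds \<rho> (w * \<rho>) = (w - 1) / ((2 + \<rho>) * w - 1) * (w * \<rho>) * g \<rho>"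
      unfolding equilibrium_odds_def g_def eqs using that by simp
    then show ?thesis
      unfolding f_def by (simp add: mult_ac)
  qed
  have den: "0 < (2 + \<rho>) * w - 1" if "0 < \<rho>" for \<rho>
  proof -
    have "(2 + \<rho>) * w - 1 = (2 * w - 1) + \<rho> * w"
      by algebra
    moreover have "0 < \<rho> * w"
      using assms that by simp
    ultimately show ?thesis
      using assms by linarith
  qed
  have "\<rho>\<^sub>1\<^sup>2 < \<rho>\<^sub>2\<^sup>2"
    using assms by (simp add: power_strict_mono)
  then have small: "w * \<rho>\<^sub>1\<^sup>2 < 1"
    using assms mult_strict_left_mono[of "\<rho>\<^sub>1\<^sup>2" "\<rho>\<^sub>2\<^sup>2" w] by linarith
  have "f \<rho>\<^sub>1 < f \<rho>\<^sub>2"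
  proof -
    have "\<rho>\<^sub>2 * ((2 + \<rho>\<^sub>1) * w - 1) - \<rho>\<^sub>1 * ((2 + \<rho>\<^sub>2) * w - 1) = (2 * w - 1) * (\<rho>\<^sub>2 - \<rho>\<^sub>1)"
      by algebra
    moreover have "0 < (2 * w - 1) * (\<rho>\<^sub>2 - \<rho>\<^sub>1)"
      using assms by simp
    ultimately have "\<rho>\<^sub>1 * ((2 + \<rho>\<^sub>2) * w - 1) < \<rho>\<^sub>2 * ((2 + \<rho>\<^sub>1) * w - 1)"
      by linarith
    then show ?thesis
      unfolding f_def using den assms by (intro frac_less_frac_by_cross) auto
  qed
  moreover have "g \<rho>\<^sub>1 < g \<rho>\<^sub>2"
  proof -
    have "(2 + \<rho>\<^sub>2 - w * \<rho>\<^sub>2\<^sup>2) * (1 - w * \<rho>\<^sub>1\<^sup>2) - (2 + \<rho>\<^sub>1 - w * \<rho>\<^sub>1\<^sup>2) * (1 - w * \<rho>\<^sub>2\<^sup>2)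
        = (\<rho>\<^sub>2 - \<rho>\<^sub>1) * (1 + w * (\<rho>\<^sub>1 + \<rho>\<^sub>2) + w * \<rho>\<^sub>1 * \<rho>\<^sub>2)"
      by algebra
    moreover have "0 < (\<rho>\<^sub>2 - \<rho>\<^sub>1) * (1 + w * (\<rho>\<^sub>1 + \<rho>\<^sub>2) + w * \<rho>\<^sub>1 * \<rho>\<^sub>2)"
      using assms by (intro mult_pos_pos add_pos_pos) auto
    ultimately show ?thesis
      unfolding g_def using assms small by (intro frac_less_frac_by_cross) auto
  qed
  moreover have "0 < f \<rho>\<^sub>2" "0 \<le> g \<rho>\<^sub>1"
    unfolding f_def g_def using assms small den by simp_all
  ultimately have "f \<rho>\<^sub>1 * g \<rho>\<^sub>1 < f \<rho>\<^sub>2 * g \<rho>\<^sub>2"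
    by (intro mult_strict_mono) auto
  then show ?thesis
    using ray assms by simp
qed

lemma equilibrium_odds_ge:
  assumes "0 < \<rho>" "\<rho> \<le> z" "\<rho> * z < 1"
  shows "z - \<rho> \<le> equilibrium_odds \<rho> z"
proof -
  have den: "0 < (2 + \<rho>) * z - \<rho>"
    using assms(1,2) by (rule equilibrium_odds_denominator_pos)
  have "z * (2 + \<rho> - \<rho> * z) - ((2 + \<rho>) * z - \<rho>) * (1 - \<rho> * z) = \<rho> * (1 - \<rho> * z + (1 + \<rho>) * z\<^sup>2)"
    by algebra
  moreover have "0 \<le> \<rho> * (1 - \<rho> * z + (1 + \<rho>) * z\<^sup>2)"
    using assms by simp
  ultimately have "((2 + \<rho>) * z - \<rho>) * (1 - \<rho> * z) \<le> z * (2 + \<rho> - \<rho> * z)"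
    by linarith
  then have "1 \<le> z * (2 + \<rho> - \<rho> * z) / (((2 + \<rho>) * z - \<rho>) * (1 - \<rho> * z))"
    using den assms by (simp add: le_divide_eq)
  then have "(z - \<rho>) * 1 \<le> (z - \<rho>) * (z * (2 + \<rho> - \<rho> * z) / (((2 + \<rho>) * z - \<rho>) * (1 - \<rho> * z)))"
    using assms by (intro mult_left_mono) auto
  then show ?thesis
    unfolding equilibrium_odds_def by simp
qed

lemma equilibrium_odds_diagonal [simp]: "equilibrium_odds \<rho> \<rho> = 0"
  by (simp add: equilibrium_odds_def)

lemma equilibrium_odds_one:
  assumes "\<rho> < 1"
  shows "equilibrium_odds \<rho> 1 = 1"
  using assms by (simp add: equilibrium_odds_def)

lemma continuous_on_equilibrium_odds:
  assumes "0 < \<rho>" "\<rho> < 1"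
  shows "continuous_on {\<rho>..1} (equilibrium_odds \<rho>)"
proof -
  have "(2 + \<rho>) * z - \<rho> \<noteq> 0" if "z \<in> {\<rho>..1}" for z
    using assms that equilibrium_odds_denominator_pos[of \<rho> z] by auto
  moreover have "1 - \<rho> * z \<noteq> 0" if "z \<in> {\<rho>..1}" for z
  proof -
    have "\<rho> * z \<le> \<rho>"
      using assms that by (intro mult_left_le) auto
    then show ?thesis
      using assms by linarith
  qed
  ultimately show ?thesis
    unfolding equilibrium_odds_def by (intro continuous_intros) auto
qed

lemma equilibrium_odds_inj:
  assumes "0 < \<rho>" "\<rho> \<le> z\<^sub>1" "\<rho> \<le> z\<^sub>2" "\<rho> * z\<^sub>1 < 1" "\<rho> * z\<^sub>2 < 1"
    and "equilibrium_odds \<rho> z\<^sub>1 = equilibrium_odds \<rho> z\<^sub>2"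
  shows "z\<^sub>1 = z\<^sub>2"
proof (cases z\<^sub>1 z\<^sub>2 rule: linorder_cases)
  case less
  have "equilibrium_odds \<rho> z\<^sub>1 < equilibrium_odds \<rho> z\<^sub>2"
    using assms(1,2) less assms(5) by (rule equilibrium_odds_strict_mono)
  with assms(6) show ?thesis
    by simp
next
  case greater
  have "equilibrium_odds \<rho> z\<^sub>2 < equilibrium_odds \<rho> z\<^sub>1"
    using assms(1,3) greater assms(4) by (rule equilibrium_odds_strict_mono)
  with assms(6) show ?thesis
    by simp
qed

section \<open>The ratio of the multiplicative factors\<close>

text \<open>The ratio \<open>q_RB / q_BB\<close> in terms of the minority odds s and the acceptance ratio z
  (see \<open>q_ratio_eq_hits_ratio\<close>).\<close>

definition hits_ratio :: "real \<Rightarrow> real \<Rightarrow> real \<Rightarrow> real" where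
  "hits_ratio \<rho> s z = \<rho> * (z\<^sup>2 + s) * (z + \<rho> * s) / ((z\<^sup>2 + \<rho>\<^sup>2 * s) * (s + \<rho> * z))"

text \<open>Up to the positive factor \<open>\<rho> * s * (1 - \<rho>^2)\<close> this is minus the numerator of the derivative
  of \<open>hits_ratio \<rho> s\<close>.  It is increasing in s, and already positive at s = z - \<rho>.\<close>

lemma hits_ratio_wronskian_pos:
  fixes \<rho> z s :: real
  assumes "0 < \<rho>" "\<rho> \<le> z" "z \<le> 1" "z - \<rho> \<le> s"
  shows "0 < \<rho> * (2 * z - \<rho>) * s\<^sup>2 + (1 + \<rho>\<^sup>2) * z\<^sup>2 * s + z ^ 3 * (2 * \<rho> - z)"
    (is "0 < ?K s")
proof -
  define u where "u = z - \<rho>"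
  have "?K s - ?K u = (s - u) * (\<rho> * (2 * z - \<rho>) * (s + u) + (1 + \<rho>\<^sup>2) * z\<^sup>2)"
    by algebra
  moreover have "0 \<le> (s - u) * (\<rho> * (2 * z - \<rho>) * (s + u) + (1 + \<rho>\<^sup>2) * z\<^sup>2)"
    using assms unfolding u_def by (intro mult_nonneg_nonneg add_nonneg_nonneg) auto
  moreover have "?K u = \<rho>\<^sup>2 * u\<^sup>2 + 2 * \<rho> * u ^ 3 + z\<^sup>2 * (\<rho>\<^sup>2 + u * (1 + \<rho>\<^sup>2 - u))"
    unfolding u_def by algebra
  moreover have "0 < \<rho>\<^sup>2 * u\<^sup>2 + 2 * \<rho> * u ^ 3 + z\<^sup>2 * (\<rho>\<^sup>2 + u * (1 + \<rho>\<^sup>2 - u))"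
  proof -
    have "0 \<le> u" "u \<le> 1 + \<rho>\<^sup>2"
      using assms unfolding u_def by (auto intro: add_increasing2)
    then have "0 < \<rho>\<^sup>2 + u * (1 + \<rho>\<^sup>2 - u)"
      using assms by (simp add: add_pos_nonneg)
    then show ?thesis
      using assms \<open>0 \<le> u\<close> by (intro add_nonneg_pos) auto
  qed
  ultimately show ?thesis
    by linarith
qed

lemma hits_ratio_has_derivative:
  assumes "0 < \<rho>" "0 < s" "0 < z"
  shows "(hits_ratio \<rho> s has_real_derivative
      - \<rho> * s * (1 - \<rho>\<^sup>2) * (\<rho> * (2 * z - \<rho>) * s\<^sup>2 + (1 + \<rho>\<^sup>2) * z\<^sup>2 * s + z ^ 3 * (2 * \<rho> - z))
        / ((z\<^sup>2 + \<rho>\<^sup>2 * s) * (s + \<rho> * z))\<^sup>2) (at z)"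
proof -
  have "0 < z\<^sup>2 + \<rho>\<^sup>2 * s" "0 < s + \<rho> * z"
    using assms by (simp_all add: add_pos_pos)
  then have "(z\<^sup>2 + \<rho>\<^sup>2 * s) * (s + \<rho> * z) \<noteq> 0"
    by simp
  then show ?thesis
    unfolding hits_ratio_def[abs_def]
    by (auto intro!: derivative_eq_intros simp: field_simps power2_eq_square power3_eq_cube)
qed

lemma hits_ratio_strict_antimono:
  assumes "0 < \<rho>" "0 < s" "\<rho> \<le> z\<^sub>1" "z\<^sub>1 < z\<^sub>2" "z\<^sub>2 \<le> 1" "z\<^sub>2 - \<rho> \<le> s"
  shows "hits_ratio \<rho> s z\<^sub>2 < hits_ratio \<rho> s z\<^sub>1"
proof (rule DERIV_neg_imp_decreasing_open[OF \<open>z\<^sub>1 < z\<^sub>2\<close>])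
  fix z
  assume "z\<^sub>1 < z" "z < z\<^sub>2"
  then have z: "0 < z" "\<rho> \<le> z" "z \<le> 1" "z - \<rho> \<le> s"
    using assms by auto
  have "0 < \<rho> * (2 * z - \<rho>) * s\<^sup>2 + (1 + \<rho>\<^sup>2) * z\<^sup>2 * s + z ^ 3 * (2 * \<rho> - z)"
    using assms(1) z(2-4) by (rule hits_ratio_wronskian_pos)
  moreover have "0 < \<rho> * s * (1 - \<rho>\<^sup>2)"
    using assms z by (simp add: power_less_one_iff)
  moreover have "0 < z\<^sup>2 + \<rho>\<^sup>2 * s" "0 < s + \<rho> * z"
    using assms z by (simp_all add: add_pos_pos)
  ultimately show "\<exists>y. (hits_ratio \<rho> s has_real_derivative y) (at z) \<and> y < 0"
    using hits_ratio_has_derivative[OF assms(1,2) z(1)] by (intro exI conjI) (auto simp: divide_pos_pos)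
next
  show "continuous_on {z\<^sub>1..z\<^sub>2} (hits_ratio \<rho> s)"
    using assms hits_ratio_has_derivative[THEN DERIV_isCont, of \<rho> s]
    by (intro continuous_at_imp_continuous_on) auto
qed

lemma hits_ratio_ray:
  assumes "0 < \<rho>" "0 < s" "0 \<le> w"
  shows "hits_ratio \<rho> s (w * \<rho>) = (w + s) / (w\<^sup>2 + s) * ((s + w\<^sup>2 * \<rho>\<^sup>2) / (s + w * \<rho>\<^sup>2))"
proof -
  have "\<rho> * ((w * \<rho>)\<^sup>2 + s) * (w * \<rho> + \<rho> * s) = \<rho>\<^sup>2 * ((w + s) * (s + w\<^sup>2 * \<rho>\<^sup>2))"
    "((w * \<rho>)\<^sup>2 + \<rho>\<^sup>2 * s) * (s + \<rho> * (w * \<rho>)) = \<rho>\<^sup>2 * ((w\<^sup>2 + s) * (s + w * \<rho>\<^sup>2))"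
    by algebra+
  then show ?thesis
    unfolding hits_ratio_def using assms by simp
qed

lemma hits_ratio_ray_mono:
  assumes "1 \<le> w" "0 < s" "0 < \<rho>\<^sub>1" "\<rho>\<^sub>1 \<le> \<rho>\<^sub>2"
  shows "hits_ratio \<rho>\<^sub>1 s (w * \<rho>\<^sub>1) \<le> hits_ratio \<rho>\<^sub>2 s (w * \<rho>\<^sub>2)"
proof -
  have "(s + w\<^sup>2 * \<rho>\<^sub>2\<^sup>2) * (s + w * \<rho>\<^sub>1\<^sup>2) - (s + w\<^sup>2 * \<rho>\<^sub>1\<^sup>2) * (s + w * \<rho>\<^sub>2\<^sup>2)
      = s * w * (w - 1) * (\<rho>\<^sub>2\<^sup>2 - \<rho>\<^sub>1\<^sup>2)"
    by algebra
  moreover have "0 \<le> s * w * (w - 1) * (\<rho>\<^sub>2\<^sup>2 - \<rho>\<^sub>1\<^sup>2)"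
    using assms by (simp add: power_mono)
  ultimately have "(s + w\<^sup>2 * \<rho>\<^sub>1\<^sup>2) * (s + w * \<rho>\<^sub>2\<^sup>2) \<le> (s + w\<^sup>2 * \<rho>\<^sub>2\<^sup>2) * (s + w * \<rho>\<^sub>1\<^sup>2)"
    by linarith
  then have "(s + w\<^sup>2 * \<rho>\<^sub>1\<^sup>2) / (s + w * \<rho>\<^sub>1\<^sup>2) \<le> (s + w\<^sup>2 * \<rho>\<^sub>2\<^sup>2) / (s + w * \<rho>\<^sub>2\<^sup>2)"
    using assms by (intro frac_le_frac_by_cross) (auto simp: add_pos_nonneg)
  moreover have "0 \<le> (w + s) / (w\<^sup>2 + s)"
    using assms by simp
  ultimately show ?thesis
    using assms by (simp only: hits_ratio_ray) (rule mult_left_mono)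
qed

lemma hits_ratio_diagonal:
  assumes "0 < \<rho>" "0 < s"
  shows "hits_ratio \<rho> s \<rho> = 1"
proof -
  have "\<rho> * (\<rho>\<^sup>2 + s) * (\<rho> + \<rho> * s) = (\<rho>\<^sup>2 + \<rho>\<^sup>2 * s) * (s + \<rho> * \<rho>)"
    by algebra
  moreover have "0 < \<rho>\<^sup>2 + \<rho>\<^sup>2 * s" "0 < s + \<rho> * \<rho>"
    using assms by (simp_all add: add_pos_pos)
  ultimately show ?thesis
    unfolding hits_ratio_def by simp
qed

lemma hits_ratio_level_curve_strict_mono:
  assumes "0 < x" "x < y" "y < 1" "x < z\<^sub>1" "z\<^sub>1 \<le> 1" "y < z\<^sub>2" "z\<^sub>2 \<le> 1"
    and "equilibrium_odds x z\<^sub>1 = s" "equilibrium_odds y z\<^sub>2 = s"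
  shows "hits_ratio x s z\<^sub>1 < hits_ratio y s z\<^sub>2"
proof -
  \<comment> \<open>The ray z = w\<rho> through the point (y, z2) of the level curve passes below (x, z1).\<close>
  define w where "w = z\<^sub>2 / y"
  have wy: "w * y = z\<^sub>2" and w: "1 < w"
    using assms unfolding w_def by auto
  have "w * x < w * y"
    using assms w by simp
  have "x * z\<^sub>1 \<le> x" "x * (w * x) \<le> x" "z\<^sub>2 * y \<le> y"
    using assms wy \<open>w * x < w * y\<close> by (simp_all add: mult_left_le mult_left_le_one_le)
  moreover have "w * y\<^sup>2 = z\<^sub>2 * y"
    using wy by (simp add: power2_eq_square mult.assoc[symmetric])
  ultimately have "x * z\<^sub>1 < 1" "x * (w * x) < 1" "w * y\<^sup>2 < 1"
    using assms by linarith+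
  have "equilibrium_odds x (w * x) < equilibrium_odds y (w * y)"
    using w assms \<open>w * y\<^sup>2 < 1\<close> by (intro equilibrium_odds_ray_strict_mono) auto
  then have odds_less: "equilibrium_odds x (w * x) < equilibrium_odds x z\<^sub>1"
    using assms wy by simp
  have wx: "w * x < z\<^sub>1"
  proof (rule ccontr)
    assume "\<not> w * x < z\<^sub>1"
    then have "equilibrium_odds x z\<^sub>1 \<le> equilibrium_odds x (w * x)"
      using assms \<open>x * (w * x) < 1\<close> equilibrium_odds_strict_mono[of x z\<^sub>1 "w * x"]
      by (cases "z\<^sub>1 = w * x") auto
    with odds_less show False
      by simp
  qed
  have "z\<^sub>1 - x \<le> s"
    using assms \<open>x * z\<^sub>1 < 1\<close> equilibrium_odds_ge[of x z\<^sub>1] by auto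
  have "hits_ratio x s z\<^sub>1 < hits_ratio x s (w * x)"
    using assms w wx \<open>z\<^sub>1 - x \<le> s\<close> by (intro hits_ratio_strict_antimono) auto
  also have "\<dots> \<le> hits_ratio y s (w * y)"
    using assms w \<open>z\<^sub>1 - x \<le> s\<close> by (intro hits_ratio_ray_mono) auto
  finally show ?thesis
    using wy by simp
qed

section \<open>The BPAM equilibrium\<close>

text \<open>When the red share of the degree is a, a single attempt of a red newcomer is accepted
  with probability a + \<rho>(1 - a) and one of a blue newcomer with probability a\<rho> + 1 - a.\<close>

definition acceptance_ratio :: "real \<Rightarrow> real \<Rightarrow> real" where
  "acceptance_ratio \<rho> a = (a + \<rho> - a * \<rho>) / (a * \<rho> + 1 - a)"

lemma acceptance_ratio_bounds:
  assumes "0 < \<rho>" "\<rho> < 1" "0 < a" "a < 1"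
  shows "\<rho> < acceptance_ratio \<rho> a" "\<rho> * acceptance_ratio \<rho> a < 1"
proof -
  define U V where "U = a + \<rho> - a * \<rho>" and "V = a * \<rho> + 1 - a"
  have "0 < a * \<rho>"
    using assms by simp
  then have "0 < V"
    using assms unfolding V_def by linarith
  have "U - \<rho> * V = a * (1 - \<rho>) * (1 + \<rho>)" "V - \<rho> * U = (1 - a) * (1 - \<rho>) * (1 + \<rho>)"
    unfolding U_def V_def by algebra+
  moreover have "0 < a * (1 - \<rho>) * (1 + \<rho>)" "0 < (1 - a) * (1 - \<rho>) * (1 + \<rho>)"
    using assms by simp_all
  ultimately have "\<rho> * V < U" "\<rho> * U < V"
    by linarith+
  then show "\<rho> < acceptance_ratio \<rho> a" "\<rho> * acceptance_ratio \<rho> a < 1"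
    unfolding acceptance_ratio_def U_def[symmetric] V_def[symmetric]
    using \<open>0 < V\<close> by (simp_all add: pos_less_divide_eq pos_divide_less_eq times_divide_eq_right)
qed

lemma acceptance_ratio_inj:
  assumes "0 < \<rho>" "\<rho> < 1" "0 < a\<^sub>1" "a\<^sub>1 < 1" "0 < a\<^sub>2" "a\<^sub>2 < 1"
    and "acceptance_ratio \<rho> a\<^sub>1 = acceptance_ratio \<rho> a\<^sub>2"
  shows "a\<^sub>1 = a\<^sub>2"
proof -
  have "0 < a\<^sub>1 * \<rho>" "0 < a\<^sub>2 * \<rho>"
    using assms by simp_all
  then have "0 < a\<^sub>1 * \<rho> + 1 - a\<^sub>1" "0 < a\<^sub>2 * \<rho> + 1 - a\<^sub>2"
    using assms by linarith+
  then have "(a\<^sub>1 + \<rho> - a\<^sub>1 * \<rho>) * (a\<^sub>2 * \<rho> + 1 - a\<^sub>2) = (a\<^sub>2 + \<rho> - a\<^sub>2 * \<rho>) * (a\<^sub>1 * \<rho> + 1 - a\<^sub>1)"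
    using assms(7) unfolding acceptance_ratio_def by (simp add: field_simps)
  moreover have "(a\<^sub>1 + \<rho> - a\<^sub>1 * \<rho>) * (a\<^sub>2 * \<rho> + 1 - a\<^sub>2) - (a\<^sub>2 + \<rho> - a\<^sub>2 * \<rho>) * (a\<^sub>1 * \<rho> + 1 - a\<^sub>1)
      = (1 - \<rho>) * (1 + \<rho>) * (a\<^sub>1 - a\<^sub>2)"
    by algebra
  ultimately show ?thesis
    using assms by simp
qed

lemma acceptance_ratio_surj:
  assumes "0 < \<rho>" "\<rho> < 1" "\<rho> < z" "\<rho> * z < 1"
  obtains a where "0 < a" "a < 1" "acceptance_ratio \<rho> a = z"
proof
  define a where "a = (z - \<rho>) / ((1 - \<rho>) * (1 + z))"
  have den: "0 < (1 - \<rho>) * (1 + z)"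
    using assms by simp
  then show "0 < a"
    unfolding a_def using assms by simp
  have "z - \<rho> < (1 - \<rho>) * (1 + z)"
    using assms by (simp add: algebra_simps)
  then show "a < 1"
    unfolding a_def using den by simp
  have "1 - \<rho> \<noteq> 0" "1 + z \<noteq> 0"
    using assms by auto
  then have "a * ((1 - \<rho>) * (1 + z)) = z - \<rho>"
    unfolding a_def by simp
  moreover have "a + \<rho> - a * \<rho> - z * (a * \<rho> + 1 - a) = a * ((1 - \<rho>) * (1 + z)) - (z - \<rho>)"
    by algebra
  ultimately have "a + \<rho> - a * \<rho> = z * (a * \<rho> + 1 - a)"
    by simp
  moreover have "0 < a * \<rho> + 1 - a"
    using assms \<open>a < 1\<close> \<open>0 < a\<close> mult_pos_pos[of a \<rho>] by linarith
  ultimately show "acceptance_ratio \<rho> a = z"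
    unfolding acceptance_ratio_def by simp
qed

lemma equilibrium_odds_acceptance_ratio:
  assumes "0 < \<rho>" "\<rho> < 1" "0 < a" "a < 1"
  defines "U \<equiv> a + \<rho> - a * \<rho>" and "V \<equiv> a * \<rho> + 1 - a"
  shows "equilibrium_odds \<rho> (acceptance_ratio \<rho> a)
    = a * U * ((2 + \<rho>) * V - \<rho> * U) / ((1 - a) * V * ((2 + \<rho>) * U - \<rho> * V))"
proof -
  have UV: "U - \<rho> * V = a * (1 - \<rho>\<^sup>2)" "V - \<rho> * U = (1 - a) * (1 - \<rho>\<^sup>2)"
    unfolding U_def V_def by algebra+
  have "0 < a * \<rho>" "0 < 1 - \<rho>\<^sup>2"
    using assms by (simp_all add: power_less_one_iff)
  then have "0 < V"
    using assms unfolding V_def by linarith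
  then have "U / V - \<rho> = (U - \<rho> * V) / V" "(2 + \<rho>) * (U / V) - \<rho> = ((2 + \<rho>) * U - \<rho> * V) / V"
    "2 + \<rho> - \<rho> * (U / V) = ((2 + \<rho>) * V - \<rho> * U) / V" "1 - \<rho> * (U / V) = (V - \<rho> * U) / V"
    by (simp_all add: field_simps)
  then have "equilibrium_odds \<rho> (U / V)
      = (U - \<rho> * V) / ((2 + \<rho>) * U - \<rho> * V) * (U / V) * (((2 + \<rho>) * V - \<rho> * U) / (V - \<rho> * U))"
    unfolding equilibrium_odds_def using \<open>0 < V\<close> by simp
  also have "\<dots> = a * U * ((2 + \<rho>) * V - \<rho> * U) / ((1 - a) * V * ((2 + \<rho>) * U - \<rho> * V))"
    unfolding UV using \<open>0 < 1 - \<rho>\<^sup>2\<close> by (simp add: mult_ac)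
  finally show ?thesis
    unfolding acceptance_ratio_def U_def V_def .
qed

lemma bpam_eq_iff_equilibrium_odds:
  assumes "0 < \<rho>" "\<rho> < 1" "0 < a" "a < 1" "r < 1"
  shows "bpam_eq r \<rho> a \<longleftrightarrow> r / (1 - r) = equilibrium_odds \<rho> (acceptance_ratio \<rho> a)"
proof -
  define U V where "U = a + \<rho> - a * \<rho>" and "V = a * \<rho> + 1 - a"
  have "U = a + \<rho> * (1 - a)" "V = (1 - a) + a * \<rho>"
    unfolding U_def V_def by (simp_all add: algebra_simps)
  moreover have "0 < \<rho> * (1 - a)" "0 < a * \<rho>"
    using assms by simp_all
  ultimately have pos: "0 < U" "0 < V"
    using assms by linarith+
  have "(2 + \<rho>) * U - \<rho> * V = (1 + \<rho>) * U + a * (1 - \<rho>) * (1 + \<rho>)"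
    unfolding U_def V_def by algebra
  moreover have "0 < (1 + \<rho>) * U" "0 < a * (1 - \<rho>) * (1 + \<rho>)"
    using assms pos by simp_all
  ultimately have "0 < (2 + \<rho>) * U - \<rho> * V"
    by linarith
  then have den: "0 < (1 - a) * V * ((2 + \<rho>) * U - \<rho> * V)"
    using assms pos by simp
  have "bpam_eq r \<rho> a \<longleftrightarrow> 2 * a * U * V - r * U * V - r * a * V - a * \<rho> * (1 - r) * U = 0"
    unfolding bpam_eq_def U_def[symmetric] V_def[symmetric] using pos
    by (simp add: field_simps)
  also have "\<dots> \<longleftrightarrow> r * ((1 - a) * V * ((2 + \<rho>) * U - \<rho> * V)) = (a * U * ((2 + \<rho>) * V - \<rho> * U)) * (1 - r)"
  proof -
    have "r * ((1 - a) * V * ((2 + \<rho>) * U - \<rho> * V)) - (a * U * ((2 + \<rho>) * V - \<rho> * U)) * (1 - r)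
        = - (1 + \<rho>) * (2 * a * U * V - r * U * V - r * a * V - a * \<rho> * (1 - r) * U)"
      unfolding U_def V_def by algebra
    then show ?thesis
      using assms by (simp add: eq_iff_diff_eq_0[of "r * _"])
  qed
  also have "\<dots> \<longleftrightarrow> r / (1 - r) = a * U * ((2 + \<rho>) * V - \<rho> * U) / ((1 - a) * V * ((2 + \<rho>) * U - \<rho> * V))"
    using den assms by (intro frac_eq_eq[symmetric]) auto
  finally show ?thesis
    using equilibrium_odds_acceptance_ratio[OF assms(1-4)] unfolding U_def V_def by simp
qed

lemma bpam_eq_unique:
  assumes "0 < \<rho>" "\<rho> < 1" "r < 1"
    and "0 < a\<^sub>1" "a\<^sub>1 < 1" "bpam_eq r \<rho> a\<^sub>1" and "0 < a\<^sub>2" "a\<^sub>2 < 1" "bpam_eq r \<rho> a\<^sub>2"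
  shows "a\<^sub>1 = a\<^sub>2"
proof -
  have z\<^sub>1: "\<rho> < acceptance_ratio \<rho> a\<^sub>1" "\<rho> * acceptance_ratio \<rho> a\<^sub>1 < 1"
    using assms(1,2,4,5) by (rule acceptance_ratio_bounds)+
  have z\<^sub>2: "\<rho> < acceptance_ratio \<rho> a\<^sub>2" "\<rho> * acceptance_ratio \<rho> a\<^sub>2 < 1"
    using assms(1,2,7,8) by (rule acceptance_ratio_bounds)+
  have e\<^sub>1: "r / (1 - r) = equilibrium_odds \<rho> (acceptance_ratio \<rho> a\<^sub>1)"
    using bpam_eq_iff_equilibrium_odds[OF assms(1,2,4,5,3)] assms(6) by blast
  have e\<^sub>2: "r / (1 - r) = equilibrium_odds \<rho> (acceptance_ratio \<rho> a\<^sub>2)"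
    using bpam_eq_iff_equilibrium_odds[OF assms(1,2,7,8,3)] assms(9) by blast
  have same_ratio: "acceptance_ratio \<rho> a\<^sub>1 = acceptance_ratio \<rho> a\<^sub>2"
    by (rule equilibrium_odds_inj[OF assms(1) less_imp_le[OF z\<^sub>1(1)] less_imp_le[OF z\<^sub>2(1)] z\<^sub>1(2) z\<^sub>2(2)])
      (simp only: e\<^sub>1[symmetric] e\<^sub>2[symmetric])
  show ?thesis
    using assms(1,2,4,5,7,8) same_ratio by (rule acceptance_ratio_inj)
qed

lemma bpam_eq_exists:
  assumes "0 < \<rho>" "\<rho> < 1" "0 < r" "r \<le> 1/2"
  obtains a where "0 < a" "a < 1" "bpam_eq r \<rho> a" "acceptance_ratio \<rho> a \<le> 1"
proof -
  have "r < 1" "0 < r / (1 - r)" "r / (1 - r) \<le> 1"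
    using assms by simp_all
  then have "\<exists>z. \<rho> \<le> z \<and> z \<le> 1 \<and> equilibrium_odds \<rho> z = r / (1 - r)"
    using assms by (intro IVT') (simp_all add: equilibrium_odds_one continuous_on_equilibrium_odds)
  then obtain z where z: "\<rho> \<le> z" "z \<le> 1" "equilibrium_odds \<rho> z = r / (1 - r)"
    by blast
  have "\<rho> < z"
    using z \<open>0 < r / (1 - r)\<close> by (cases "z = \<rho>") auto
  moreover have "\<rho> * z < 1"
  proof -
    have "\<rho> * z \<le> \<rho>"
      using assms z by (intro mult_left_le) auto
    then show ?thesis
      using assms by linarith
  qed
  ultimately obtain a where a: "0 < a" "a < 1" "acceptance_ratio \<rho> a = z"
    using acceptance_ratio_surj[OF assms(1,2)] by blast
  moreover have "bpam_eq r \<rho> a"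
    using z(3) unfolding bpam_eq_iff_equilibrium_odds[OF assms(1,2) a(1,2) \<open>r < 1\<close>] a(3) by simp
  ultimately show ?thesis
    using that z(2) by simp
qed

lemma bpam_alpha_equilibrium:
  assumes "0 < \<rho>" "\<rho> < 1" "0 < r" "r \<le> 1/2"
  defines "z \<equiv> acceptance_ratio \<rho> (bpam_alpha r \<rho>)"
  shows "0 < bpam_alpha r \<rho>" "bpam_alpha r \<rho> < 1" "\<rho> < z" "z \<le> 1"
    and "equilibrium_odds \<rho> z = r / (1 - r)"
proof -
  have "r < 1"
    using assms by simp
  obtain a where a: "0 < a" "a < 1" "bpam_eq r \<rho> a" "acceptance_ratio \<rho> a \<le> 1"
    using bpam_eq_exists[OF assms(1-4)] .
  have "bpam_alpha r \<rho> = a"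
    unfolding bpam_alpha_def
  proof (rule the_equality)
    show "0 < a \<and> a < 1 \<and> bpam_eq r \<rho> a"
      using a by simp
    show "b = a" if "0 < b \<and> b < 1 \<and> bpam_eq r \<rho> b" for b
      using bpam_eq_unique[OF assms(1,2) \<open>r < 1\<close>, of b a] that a by blast
  qed
  moreover have "\<rho> < acceptance_ratio \<rho> a"
    using assms(1,2) a(1,2) by (rule acceptance_ratio_bounds)
  moreover have "equilibrium_odds \<rho> (acceptance_ratio \<rho> a) = r / (1 - r)"
    using a(3) unfolding bpam_eq_iff_equilibrium_odds[OF assms(1,2) a(1,2) \<open>r < 1\<close>] by simp
  ultimately show "0 < bpam_alpha r \<rho>" "bpam_alpha r \<rho> < 1" "\<rho> < z" "z \<le> 1"
    and "equilibrium_odds \<rho> z = r / (1 - r)"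
    unfolding z_def using a by simp_all
qed

lemma bpam_alpha_homophily_one:
  assumes "0 < r" "r < 1"
  shows "bpam_alpha r 1 = r"
  unfolding bpam_alpha_def
proof (rule the_equality)
  have eq: "bpam_eq r 1 b \<longleftrightarrow> b = r" for b
    unfolding bpam_eq_def by (auto simp: algebra_simps)
  show "0 < r \<and> r < 1 \<and> bpam_eq r 1 r"
    using assms eq by simp
  show "b = r" if "0 < b \<and> b < 1 \<and> bpam_eq r 1 b" for b
    using that eq by simp
qed

lemma hits_ratio_minority_odds:
  assumes "0 < \<rho>" "0 < r" "r < 1" "0 < z"
  shows "hits_ratio \<rho> (r / (1 - r)) z
    = \<rho> * ((1 - r) * z\<^sup>2 + r) * ((1 - r) * z + \<rho> * r) / (((1 - r) * z\<^sup>2 + \<rho>\<^sup>2 * r) * (r + \<rho> * (1 - r) * z))"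
proof -
  define W\<^sub>B W\<^sub>R N\<^sub>B N\<^sub>R where "W\<^sub>B = (1 - r) * z + \<rho> * r" and "W\<^sub>R = r + \<rho> * (1 - r) * z"
    and "N\<^sub>B = (1 - r) * z\<^sup>2 + \<rho>\<^sup>2 * r" and "N\<^sub>R = (1 - r) * z\<^sup>2 + r"
  have "0 < W\<^sub>B" "0 < W\<^sub>R" "0 < N\<^sub>B"
    unfolding W\<^sub>B_def W\<^sub>R_def N\<^sub>B_def using assms by (simp_all add: add_pos_pos)
  define c where "c = 1 - r"
  have "c \<noteq> 0"
    using assms unfolding c_def by simp
  then have "z\<^sup>2 + r / c = N\<^sub>R / c" "z + \<rho> * (r / c) = W\<^sub>B / c"
    "z\<^sup>2 + \<rho>\<^sup>2 * (r / c) = N\<^sub>B / c" "r / c + \<rho> * z = W\<^sub>R / c"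
    unfolding N\<^sub>R_def W\<^sub>B_def N\<^sub>B_def W\<^sub>R_def c_def[symmetric] by (simp_all add: field_simps)
  then have "hits_ratio \<rho> (r / (1 - r)) z = \<rho> * N\<^sub>R * W\<^sub>B / (N\<^sub>B * W\<^sub>R)"
    unfolding hits_ratio_def c_def[symmetric]
    using \<open>c \<noteq> 0\<close> \<open>0 < W\<^sub>B\<close> \<open>0 < W\<^sub>R\<close> \<open>0 < N\<^sub>B\<close> by (simp add: field_simps)
  then show ?thesis
    unfolding N\<^sub>R_def W\<^sub>B_def N\<^sub>B_def W\<^sub>R_def .
qed

lemma q_ratio_eq_hits_ratio:
  assumes "0 < \<rho>" "0 < a" "a < 1" "0 < r" "r < 1"
  shows "(p_in_RB r \<rho> a * p_out_BB \<rho> a + p_in_RR r \<rho> a * p_out_RB \<rho> a)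
       / (p_in_BB r \<rho> a * p_out_BB \<rho> a + p_in_BR r \<rho> a * p_out_RB \<rho> a)
       = hits_ratio \<rho> (r / (1 - r)) (acceptance_ratio \<rho> a)"
proof -
  define V z where "V = a * \<rho> + 1 - a" and "z = acceptance_ratio \<rho> a"
  have "0 < \<rho> * (1 - a)" "0 < a * \<rho>"
    using assms by simp_all
  then have "0 < a + \<rho> * (1 - a)" and V: "0 < V"
    using assms unfolding V_def by linarith+
  then have z: "0 < z"
    unfolding z_def acceptance_ratio_def V_def[symmetric] by (simp add: algebra_simps)
  have "z * V = a + \<rho> - a * \<rho>"
    unfolding z_def acceptance_ratio_def V_def[symmetric] using V by simp
  then have U: "a + \<rho> * (1 - a) = z * V"
    by (simp add: algebra_simps)
  define W\<^sub>B W\<^sub>R N\<^sub>B N\<^sub>R where "W\<^sub>B = (1 - r) * z + \<rho> * r" and "W\<^sub>R = r + \<rho> * (1 - r) * z"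
    and "N\<^sub>B = (1 - r) * z\<^sup>2 + \<rho>\<^sup>2 * r" and "N\<^sub>R = (1 - r) * z\<^sup>2 + r"
  have W: "0 < W\<^sub>B" "0 < W\<^sub>R" and N: "0 < N\<^sub>B"
    unfolding W\<^sub>B_def W\<^sub>R_def N\<^sub>B_def using assms z by (simp_all add: add_pos_pos)
  have "\<rho> * a + 1 - a = V"
    unfolding V_def by simp
  then have out: "p_out_BB \<rho> a = (1 - a) / V" "p_out_RB \<rho> a = \<rho> * (1 - a) / (z * V)"
    unfolding p_out_BB_def p_out_RB_def U by simp_all
  have D: "D_B r \<rho> a = W\<^sub>B / (z * V)" "D_R r \<rho> a = W\<^sub>R / (z * V)"
    unfolding D_B_def D_R_def W\<^sub>B_def W\<^sub>R_def U V_def[symmetric] using V z by (simp_all add: field_simps)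
  have p_in: "p_in_BB r \<rho> a = (1 - r) * z / W\<^sub>B" "p_in_BR r \<rho> a = \<rho> * r / W\<^sub>B"
    "p_in_RR r \<rho> a = r / W\<^sub>R" "p_in_RB r \<rho> a = \<rho> * (1 - r) * z / W\<^sub>R"
    unfolding p_in_BB_def p_in_BR_def p_in_RR_def p_in_RB_def D U V_def[symmetric]
    using V z W by (simp_all add: field_simps)
  have q: "p_in_RB r \<rho> a * p_out_BB \<rho> a + p_in_RR r \<rho> a * p_out_RB \<rho> a = (1 - a) / (z * V) * (\<rho> * N\<^sub>R / W\<^sub>R)"
    "p_in_BB r \<rho> a * p_out_BB \<rho> a + p_in_BR r \<rho> a * p_out_RB \<rho> a = (1 - a) / (z * V) * (N\<^sub>B / W\<^sub>B)"
    unfolding p_in out N\<^sub>R_def N\<^sub>B_def using V z W by (simp_all add: field_simps power2_eq_square)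
  have hits: "hits_ratio \<rho> (r / (1 - r)) z = \<rho> * N\<^sub>R * W\<^sub>B / (N\<^sub>B * W\<^sub>R)"
    unfolding N\<^sub>R_def W\<^sub>B_def N\<^sub>B_def W\<^sub>R_def using assms(1,4,5) z by (rule hits_ratio_minority_odds)
  have "(1 - a) / (z * V) \<noteq> 0"
    using V z assms by simp
  then have "(1 - a) / (z * V) * (\<rho> * N\<^sub>R / W\<^sub>R) / ((1 - a) / (z * V) * (N\<^sub>B / W\<^sub>B)) = \<rho> * N\<^sub>R * W\<^sub>B / (N\<^sub>B * W\<^sub>R)"
    using W N by (simp add: mult_ac)
  then show ?thesis
    unfolding z_def[symmetric] q hits .
qed

section \<open>Monotonicity of the ratio\<close>

lemma F_ratio_at_equilibrium:
  assumes "0 < \<rho>" "\<rho> < 1" "0 < r" "r \<le> 1/2"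
  obtains z where "\<rho> < z" "z \<le> 1" "equilibrium_odds \<rho> z = r / (1 - r)"
    "F_ratio t r \<rho> = hits_ratio \<rho> (r / (1 - r)) z"
proof
  let ?z = "acceptance_ratio \<rho> (bpam_alpha r \<rho>)"
  show "\<rho> < ?z" "?z \<le> 1" "equilibrium_odds \<rho> ?z = r / (1 - r)"
    using bpam_alpha_equilibrium[OF assms] by simp_all
  show "F_ratio t r \<rho> = hits_ratio \<rho> (r / (1 - r)) ?z"
    unfolding F_ratio_def q_RB_def q_BB_def Let_def
    using bpam_alpha_equilibrium[OF assms] assms by (intro q_ratio_eq_hits_ratio) auto
qed

lemma F_ratio_homophily_one:
  assumes "0 < r" "r < 1"
  shows "F_ratio t r 1 = 1"
proof -
  have "acceptance_ratio 1 r = 1"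
    by (simp add: acceptance_ratio_def)
  then show ?thesis
    unfolding F_ratio_def q_RB_def q_BB_def Let_def bpam_alpha_homophily_one[OF assms]
    using assms q_ratio_eq_hits_ratio[of 1 r r] hits_ratio_diagonal[of 1 "r / (1 - r)"] by simp
qed

lemma F_ratio_less_one:
  assumes "0 < r" "r \<le> 1/2" "0 < x" "x < 1"
  shows "F_ratio t r x < 1"
proof -
  obtain z where z: "x < z" "z \<le> 1" "equilibrium_odds x z = r / (1 - r)"
    and F: "F_ratio t r x = hits_ratio x (r / (1 - r)) z"
    using assms(3,4,1,2) by (rule F_ratio_at_equilibrium)
  have "x * z \<le> x"
    using assms z by (intro mult_left_le) auto
  then have "x * z < 1"
    using assms by linarith
  then have "z - x \<le> r / (1 - r)"
    using assms z equilibrium_odds_ge[of x z] by simp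
  then have "hits_ratio x (r / (1 - r)) z < hits_ratio x (r / (1 - r)) x"
    using assms z by (intro hits_ratio_strict_antimono) auto
  then show ?thesis
    using assms F hits_ratio_diagonal[of x "r / (1 - r)"] by simp
qed

lemma F_ratio_strict_mono_below_one:
  assumes "0 < r" "r \<le> 1/2" "0 < x" "x < y" "y < 1"
  shows "F_ratio t r x < F_ratio t r y"
proof -
  have "x < 1" "0 < y"
    using assms by simp_all
  obtain z\<^sub>1 where "x < z\<^sub>1" "z\<^sub>1 \<le> 1" "equilibrium_odds x z\<^sub>1 = r / (1 - r)"
    and "F_ratio t r x = hits_ratio x (r / (1 - r)) z\<^sub>1"
    using assms(3) \<open>x < 1\<close> assms(1,2) by (rule F_ratio_at_equilibrium)
  moreover obtain z\<^sub>2 where "y < z\<^sub>2" "z\<^sub>2 \<le> 1" "equilibrium_odds y z\<^sub>2 = r / (1 - r)"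
    and "F_ratio t r y = hits_ratio y (r / (1 - r)) z\<^sub>2"
    using \<open>0 < y\<close> assms(5,1,2) by (rule F_ratio_at_equilibrium)
  ultimately show ?thesis
    using assms hits_ratio_level_curve_strict_mono[of x y z\<^sub>1 z\<^sub>2 "r / (1 - r)"] by simp
qed

theorem proposition2:
  fixes r :: real and t :: nat
  assumes "0 < r" and "r \<le> 1/2" and "t \<ge> 1"
  shows "strict_mono_on {0<..1} (F_ratio t r) \<and> F_ratio t r 1 = 1"
proof -
  have F1: "F_ratio t r 1 = 1"
    using assms by (intro F_ratio_homophily_one) auto
  have "F_ratio t r x < F_ratio t r y" if "x \<in> {0<..1}" "y \<in> {0<..1}" "x < y" for x y
    using that assms F1 F_ratio_less_one[of r x t] F_ratio_strict_mono_below_one[of r x y t]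
    by (cases "y = 1") auto
  then show ?thesis
    using F1 by (auto intro: strict_mono_onI)
qed

end
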